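(* Let $h$ be a Hessenberg function on $\{1,\dots,n\}$ with degree tuple $(\beta_n,\dots,\beta_1)$, and let $R=\mathbb{Z}[x_1,\dots,x_n]$. Then $R/J_h$ is a free $\mathbb{Z}$-module with basis (the images of) the monomials $$\mathcal{B}_h=\{x_1^{\alpha_1}x_2^{\alpha_2}\cdots x_n^{\alpha_n} : 0\le\alpha_i\le\beta_i-1,\ i=1,\dots,n\}.$$
   Context: A Hessenberg function is a map $h:\{1,\dots,n\}\to\{1,\dots,n\}$, $h_i:=h(i)$, with $i\le h_i\le n$ for all $i$ and $h_i\le h_{i+1}$ for $1\le i\le n-1$. Its degree tuple is $(\beta_n,\beta_{n-1},\dots,\beta_1)$ with $\beta_i=i-\#\{k: h_k<i\}$. For a set $S$ of variables, $\tilde e_r(S)$ denotes the complete homogeneous symmetric polynomial of degree $r$ in $S$ (sum of all degree-$r$ monomials in $S$, e.g. $\tilde e_2(x_3,x_4)=x_3^2+x_3x_4+x_4^2$). The ideal is $J_h=\langle \tilde e_{\beta_n}(x_n),\tilde e_{\beta_{n-1}}(x_{n-1},x_n),\dots,\tilde e_{\beta_1}(x_1,\dots,x_n)\rangle\subseteq R$, i.e. the $i$-th generator is $\tilde e_{\beta_i}(x_i,x_{i+1},\dots,x_n)$. *)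

theory Defs
  imports Main "HOL-Library.Poly_Mapping"
begin

text \<open>Multivariate polynomials over the integers in variables x_1, x_2, ...:
  a polynomial is a finitely supported map from exponent vectors
  (finitely supported maps nat to nat) to integer coefficients.\<close>
type_synonym mpoly_int = "(nat \<Rightarrow>\<^sub>0 nat) \<Rightarrow>\<^sub>0 int"

definition monomial :: "(nat \<Rightarrow>\<^sub>0 nat) \<Rightarrow> mpoly_int" where
  "monomial \<alpha> = Poly_Mapping.single \<alpha> 1"

definition in_R :: "nat \<Rightarrow> mpoly_int \<Rightarrow> bool" where
  "in_R n p \<longleftrightarrow> (\<forall>\<alpha>\<in>Poly_Mapping.keys p. Poly_Mapping.keys \<alpha> \<subseteq> {1..n})"

definition is_hessenberg :: "nat \<Rightarrow> (nat \<Rightarrow> nat) \<Rightarrow> bool" where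
  "is_hessenberg n h \<longleftrightarrow>
     (\<forall>i\<in>{1..n}. i \<le> h i \<and> h i \<le> n) \<and>
     (\<forall>i. 1 \<le> i \<and> i < n \<longrightarrow> h i \<le> h (Suc i))"

definition hess_beta :: "nat \<Rightarrow> (nat \<Rightarrow> nat) \<Rightarrow> nat \<Rightarrow> nat" where
  "hess_beta n h i = i - card {k \<in> {1..n}. h k < i}"

definition complete_hom :: "nat \<Rightarrow> nat set \<Rightarrow> mpoly_int" where
  "complete_hom r S =
     (\<Sum>\<alpha> \<in> {\<alpha>. Poly_Mapping.keys \<alpha> \<subseteq> S \<and> (\<Sum>j\<in>S. Poly_Mapping.lookup \<alpha> j) = r}. monomial \<alpha>)"

definition hess_ideal :: "nat \<Rightarrow> (nat \<Rightarrow> nat) \<Rightarrow> mpoly_int set" where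
  "hess_ideal n h =
     {(\<Sum>i=1..n. c i * complete_hom (hess_beta n h i) {i..n}) | c. \<forall>i\<in>{1..n}. in_R n (c i)}"

definition hess_basis_exps :: "nat \<Rightarrow> (nat \<Rightarrow> nat) \<Rightarrow> (nat \<Rightarrow>\<^sub>0 nat) set" where
  "hess_basis_exps n h =
     {\<alpha>. Poly_Mapping.keys \<alpha> \<subseteq> {1..n} \<and> (\<forall>i\<in>{1..n}. Poly_Mapping.lookup \<alpha> i \<le> hess_beta n h i - 1)}"

end

theory Submission
  imports Defs "HOL-Computational_Algebra.Polynomial"
begin

(* Proof idea: a triangular Groebner-type reduction.
   Write g_k = e~_{beta_k}(x_k,...,x_n).  Grouping by the exponent of x_k,
     g_k = sum_{j <= beta_k} e~_{beta_k - j}(x_{k+1},...,x_n) * x_k^j,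
   so g_k is a MONIC polynomial of degree beta_k in x_k whose coefficients only involve
   x_{k+1},...,x_n, and beta_k >= 1 for a Hessenberg function.  Division by g_k with respect
   to x_k therefore yields a unique remainder rem_k f of x_k-degree < beta_k; rem_k is additive
   and commutes with multiplication by polynomials free of x_k.  Applying rem_1, ..., rem_n
   in turn gives a normal form nf f with f - nf f in J_h, all monomials of nf f in B_h,
   nf vanishing on J_h, and nf fixing every integer combination of B_h.
   Spanning and linear independence of B_h modulo J_h follow immediately. *)

abbreviation lookup where "lookup \<equiv> Poly_Mapping.lookup"
abbreviation keys where "keys \<equiv> Poly_Mapping.keys"
abbreviation single where "single \<equiv> Poly_Mapping.single"

definition vars_in :: "nat set \<Rightarrow> mpoly_int \<Rightarrow> bool" where
  "vars_in S p \<longleftrightarrow> (\<forall>\<gamma>\<in>keys p. keys \<gamma> \<subseteq> S)"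

definition deg_less :: "nat \<Rightarrow> nat \<Rightarrow> mpoly_int \<Rightarrow> bool" where
  "deg_less k b p \<longleftrightarrow> (\<forall>\<gamma>\<in>keys p. lookup \<gamma> k < b)"

definition var :: "nat \<Rightarrow> mpoly_int" where
  "var k = single (single k 1) 1"

definition at_var :: "nat \<Rightarrow> mpoly_int poly \<Rightarrow> mpoly_int" where
  "at_var k P = poly P (var k)"

definition strip :: "nat \<Rightarrow> (nat \<Rightarrow>\<^sub>0 nat) \<Rightarrow> (nat \<Rightarrow>\<^sub>0 nat)" where
  "strip k \<gamma> = \<gamma> - single k (lookup \<gamma> k)"

lemma lookup_strip: "lookup (strip k \<gamma>) i = (if i = k then 0 else lookup \<gamma> i)"
  by (simp add: strip_def lookup_minus lookup_single when_def)

lemma strip_add: "strip k \<gamma> + single k (lookup \<gamma> k) = \<gamma>"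
  by (rule poly_mapping_eqI) (simp add: lookup_add lookup_strip lookup_single when_def)

lemma keys_strip: "keys (strip k \<gamma>) = keys \<gamma> - {k}"
  by (auto simp: in_keys_iff lookup_strip split: if_splits)

lemma keys_add_exps: "keys ((a::nat \<Rightarrow>\<^sub>0 nat) + b) = keys a \<union> keys b"
  by (simp add: set_eq_iff in_keys_iff lookup_add)

lemma vars_in_0 [simp]: "vars_in S 0"
  by (simp add: vars_in_def)

lemma vars_in_1 [simp]: "vars_in S 1"
  by (simp add: vars_in_def)

lemma vars_in_add: "vars_in S p \<Longrightarrow> vars_in S q \<Longrightarrow> vars_in S (p + q)"
  unfolding vars_in_def using keys_add[of p q] by (meson Un_iff subsetD)

lemma vars_in_diff: "vars_in S p \<Longrightarrow> vars_in S q \<Longrightarrow> vars_in S (p - q)"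
  unfolding vars_in_def using keys_diff[of p q] by (meson Un_iff subsetD)

lemma vars_in_mult:
  assumes "vars_in S p" "vars_in S q"
  shows "vars_in S (p * q)"
  unfolding vars_in_def
proof
  fix \<gamma> assume "\<gamma> \<in> keys (p * q)"
  then obtain a b where "a \<in> keys p" "b \<in> keys q" "\<gamma> = a + b"
    using keys_mult[of p q] by blast
  then show "keys \<gamma> \<subseteq> S" using assms unfolding vars_in_def by (auto simp: keys_add_exps)
qed

lemma vars_in_sum: "(\<And>i. i \<in> A \<Longrightarrow> vars_in S (f i)) \<Longrightarrow> vars_in S (sum f A)"
  by (induction A rule: infinite_finite_induct) (auto intro: vars_in_add)

lemma vars_in_pow: "vars_in S p \<Longrightarrow> vars_in S (p ^ m)"
  by (induction m) (simp_all add: vars_in_mult)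

lemma vars_in_mono: "vars_in S p \<Longrightarrow> S \<subseteq> T \<Longrightarrow> vars_in T p"
  unfolding vars_in_def by blast

lemma vars_in_single: "keys \<gamma> \<subseteq> S \<Longrightarrow> vars_in S (single \<gamma> c)"
  unfolding vars_in_def by simp

lemma vars_in_var: "k \<in> S \<Longrightarrow> vars_in S (var k)"
  unfolding var_def by (rule vars_in_single) simp

lemma in_R_iff_vars_in: "in_R n p \<longleftrightarrow> vars_in {1..n} p"
  by (simp add: in_R_def vars_in_def)

lemma deg_less_0 [simp]: "deg_less k b 0"
  by (simp add: deg_less_def)

lemma deg_less_add: "deg_less k b p \<Longrightarrow> deg_less k b q \<Longrightarrow> deg_less k b (p + q)"
  unfolding deg_less_def using keys_add[of p q] by (meson Un_iff subsetD)

lemma deg_less_diff: "deg_less k b p \<Longrightarrow> deg_less k b q \<Longrightarrow> deg_less k b (p - q)"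
  unfolding deg_less_def using keys_diff[of p q] by (meson Un_iff subsetD)

lemma deg_less_sum: "(\<And>i. i \<in> A \<Longrightarrow> deg_less k b (f i)) \<Longrightarrow> deg_less k b (sum f A)"
  by (induction A rule: infinite_finite_induct) (auto intro: deg_less_add)

lemma deg_less_free_mult:
  assumes "vars_in (- {k}) p" "deg_less k b q"
  shows "deg_less k b (p * q)"
  unfolding deg_less_def
proof
  fix \<gamma> assume "\<gamma> \<in> keys (p * q)"
  then obtain x y where xy: "x \<in> keys p" "y \<in> keys q" "\<gamma> = x + y"
    using keys_mult[of p q] by blast
  have "lookup x k = 0" using assms(1) xy(1) unfolding vars_in_def by (auto simp: in_keys_iff)
  then show "lookup \<gamma> k < b" using assms(2) xy unfolding deg_less_def by (simp add: lookup_add)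
qed

lemma var_pow: "var k ^ m = single (single k m) 1"
  by (induction m) (simp_all add: var_def mult_single flip: single_add)

lemma sum_of_terms: "f = (\<Sum>\<gamma>\<in>keys f. single \<gamma> (lookup f \<gamma>))"
  by (rule poly_mapping_eqI) (simp add: lookup_sum lookup_single when_def in_keys_iff)

lemma sum_of_terms_in_var:
  "f = (\<Sum>\<gamma>\<in>keys f. single (strip k \<gamma>) (lookup f \<gamma>) * var k ^ lookup \<gamma> k)"
proof -
  have "(\<Sum>\<gamma>\<in>keys f. single (strip k \<gamma>) (lookup f \<gamma>) * var k ^ lookup \<gamma> k)
      = (\<Sum>\<gamma>\<in>keys f. single \<gamma> (lookup f \<gamma>))"
    by (rule sum.cong) (simp_all add: var_pow mult_single strip_add)
  then show ?thesis using sum_of_terms[of f] by simp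
qed

lemma finite_bounded_exps:
  assumes "finite S"
  shows "finite {\<alpha> :: nat \<Rightarrow>\<^sub>0 nat. keys \<alpha> \<subseteq> S \<and> (\<forall>i. lookup \<alpha> i \<le> M)}"
    (is "finite ?E")
proof -
  let ?F = "{f :: nat \<Rightarrow> nat. \<forall>x. (x \<in> S \<longrightarrow> f x \<in> {0..M}) \<and> (x \<notin> S \<longrightarrow> f x = 0)}"
  have "finite ?F" using assms by (intro finite_set_of_finite_funs) auto
  moreover have "lookup ` ?E \<subseteq> ?F" by (auto simp: in_keys_iff)
  ultimately have "finite (lookup ` ?E)" by (rule finite_subset[rotated])
  moreover have "inj_on lookup ?E" by (rule inj_onI, rule poly_mapping_eqI) simp
  ultimately show ?thesis by (rule finite_imageD)
qed

lemma vars_in_single_strip: "vars_in (- {k}) (single (strip k \<gamma>) c)"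
  by (rule vars_in_single) (auto simp: keys_strip)

lemma monic_division_in_subring:
  fixes G :: "'a::comm_ring_1 poly"
  assumes A0: "A 0" and A_add: "\<And>x y. A x \<Longrightarrow> A y \<Longrightarrow> A (x + y)"
    and A_diff: "\<And>x y. A x \<Longrightarrow> A y \<Longrightarrow> A (x - y)"
    and A_mult: "\<And>x y. A x \<Longrightarrow> A y \<Longrightarrow> A (x * y)"
    and A_G: "\<And>j. A (coeff G j)" and monic: "lead_coeff G = 1" and deg_G: "1 \<le> degree G"
    and A_P: "\<And>j. A (coeff P j)"
  shows "\<exists>Q R. (\<forall>j. A (coeff Q j)) \<and> (\<forall>j. A (coeff R j)) \<and> P = G * Q + R \<and> degree R < degree G"
  using A_P
proof (induction "degree P" arbitrary: P rule: less_induct)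
  case less
  have A_sum: "A (sum f S)" if "\<And>i. i \<in> S \<Longrightarrow> A (f i)" for f and S :: "nat set"
    using that by (induction S rule: infinite_finite_induct) (auto simp: A0 A_add)
  have A_coeff_mult: "A (coeff (p * q) j)" if "\<And>j. A (coeff p j)" "\<And>j. A (coeff q j)" for p q j
    unfolding coeff_mult by (rule A_sum) (simp add: A_mult that)
  show ?case
  proof (cases "degree P < degree G")
    case True
    then show ?thesis using less.prems A0 by (intro exI[of _ 0] exI[of _ P]) simp
  next
    case False
    text \<open>Cancel the leading term of P by a monomial multiple of G and recurse.\<close>
    define m where "m = degree P - degree G"
    define c where "c = lead_coeff P"
    define P' where "P' = P - monom c m * G"
    have lead_cancel: "coeff (monom c m * G) (degree P) = c"
      using False monic by (simp add: coeff_monom_mult m_def)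
    have "degree (monom c m * G) \<le> degree P"
      using degree_mult_le[of "monom c m" G] degree_monom_le[of c m] False m_def by linarith
    then have "degree P' \<le> degree P" unfolding P'_def by (simp add: degree_diff_le)
    moreover have "coeff P' (degree P) = 0" unfolding P'_def using lead_cancel c_def by simp
    moreover have "0 < degree P" using False deg_G by linarith
    ultimately have smaller: "degree P' < degree P"
      by (metis leading_coeff_0_iff le_neq_implies_less degree_0)
    have "A (coeff P' j)" for j
      unfolding P'_def coeff_diff using less.prems A_G A_coeff_mult A0 c_def A_diff by simp
    then obtain Q R where QR: "\<forall>j. A (coeff Q j)" "\<forall>j. A (coeff R j)" "P' = G * Q + R"
        "degree R < degree G"
      using less.hyps[OF smaller] by blast
    have "P = G * (Q + monom c m) + R" using QR(3) unfolding P'_def by (simp add: algebra_simps)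
    moreover have "A (coeff (Q + monom c m) j)" for j
      using QR(1) less.prems c_def A0 A_add by simp
    ultimately show ?thesis using QR by blast
  qed
qed

lemma lookup_mult_single_shift:
  "lookup ((c::mpoly_int) * single \<beta> 1) (\<delta> + \<beta>) = lookup c \<delta>"
proof -
  have eq: "x + \<beta> = \<delta> + \<beta> \<longleftrightarrow> x = \<delta>" for x :: "nat \<Rightarrow>\<^sub>0 nat"
    by (simp add: poly_mapping_eq_iff lookup_add fun_eq_iff)
  have "c * single \<beta> 1 = (\<Sum>\<gamma>\<in>keys c. single \<gamma> (lookup c \<gamma>)) * single \<beta> 1"
    using sum_of_terms[of c] by simp
  also have "\<dots> = (\<Sum>\<gamma>\<in>keys c. single (\<gamma> + \<beta>) (lookup c \<gamma>))"
    by (simp add: sum_distrib_right mult_single)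
  finally show ?thesis
    by (simp add: lookup_sum lookup_single when_def in_keys_iff eq)
qed

lemma lookup_free_mult_var_pow:
  assumes "vars_in (- {k}) c" "lookup \<gamma> k \<noteq> i"
  shows "lookup (c * var k ^ i) \<gamma> = 0"
proof -
  have "\<gamma> \<notin> keys (c * var k ^ i)"
  proof
    assume "\<gamma> \<in> keys (c * var k ^ i)"
    then obtain a b where ab: "a \<in> keys c" "b \<in> keys (var k ^ i)" "\<gamma> = a + b"
      using keys_mult[of c "var k ^ i"] by blast
    have "lookup a k = 0" using assms(1) ab(1) unfolding vars_in_def by (auto simp: in_keys_iff)
    moreover have "b = single k i" using ab(2) by (simp add: var_pow split: if_splits)
    ultimately show False using assms(2) ab(3) by (simp add: lookup_add)
  qed
  then show ?thesis by (simp add: in_keys_iff)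
qed

lemma lookup_at_var:
  assumes "\<forall>j. vars_in (- {k}) (coeff P j)" "lookup \<delta> k = 0"
  shows "lookup (at_var k P) (\<delta> + single k j) = lookup (coeff P j) \<delta>"
proof -
  have "lookup (at_var k P) (\<delta> + single k j)
      = (\<Sum>i\<le>degree P. lookup (coeff P i * var k ^ i) (\<delta> + single k j))"
    by (simp add: at_var_def poly_altdef lookup_sum)
  also have "\<dots> = (\<Sum>i\<le>degree P. if i = j then lookup (coeff P j) \<delta> else 0)"
  proof (rule sum.cong)
    fix i
    show "lookup (coeff P i * var k ^ i) (\<delta> + single k j)
        = (if i = j then lookup (coeff P j) \<delta> else 0)"
    proof (cases "i = j")
      case True
      then show ?thesis by (simp add: var_pow lookup_mult_single_shift)
    next
      case False
      then have "lookup (\<delta> + single k j) k \<noteq> i" using assms(2) by (simp add: lookup_add)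
      then show ?thesis using False assms(1) lookup_free_mult_var_pow by simp
    qed
  qed simp
  also have "\<dots> = lookup (coeff P j) \<delta>"
    by (simp add: coeff_eq_0)
  finally show ?thesis .
qed

lemma at_var_eq_0:
  assumes free: "\<forall>j. vars_in (- {k}) (coeff P j)" and zero: "at_var k P = 0"
  shows "P = 0"
proof (rule poly_eqI, rule poly_mapping_eqI)
  fix j \<delta>
  show "lookup (coeff P j) \<delta> = lookup (coeff 0 j) \<delta>"
  proof (cases "lookup \<delta> k = 0")
    case True
    then show ?thesis using lookup_at_var[OF free True, of j] zero by simp
  next
    case False
    then have "k \<in> keys \<delta>" by (simp add: in_keys_iff)
    then have "\<delta> \<notin> keys (coeff P j)" using free unfolding vars_in_def by blast
    then show ?thesis by (simp add: in_keys_iff)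
  qed
qed

lemma at_var_expansion:
  assumes "vars_in S f"
  obtains P where "\<forall>j. vars_in (S - {k}) (coeff P j)" and "at_var k P = f"
    and "\<And>b. 1 \<le> b \<Longrightarrow> deg_less k b f \<Longrightarrow> degree P < b"
proof
  define P where "P = (\<Sum>\<gamma>\<in>keys f. monom (single (strip k \<gamma>) (lookup f \<gamma>)) (lookup \<gamma> k))"
  have keys_coeff: "keys (strip k \<gamma>) \<subseteq> S - {k}" if "\<gamma> \<in> keys f" for \<gamma>
    using assms that unfolding vars_in_def keys_strip by blast
  show "\<forall>j. vars_in (S - {k}) (coeff P j)"
  proof (intro allI, unfold P_def coeff_sum, rule vars_in_sum)
    fix j \<gamma> assume "\<gamma> \<in> keys f"
    then show "vars_in (S - {k}) (coeff (monom (single (strip k \<gamma>) (lookup f \<gamma>)) (lookup \<gamma> k)) j)"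
      using keys_coeff by (simp add: coeff_monom vars_in_single)
  qed
  show "at_var k P = f"
    unfolding P_def at_var_def by (simp add: poly_sum poly_monom flip: sum_of_terms_in_var)
  fix b assume b: "1 \<le> b" "deg_less k b f"
  have "degree P \<le> b - 1" unfolding P_def
  proof (rule degree_sum_le)
    fix \<gamma> assume "\<gamma> \<in> keys f"
    then have "lookup \<gamma> k < b" using b unfolding deg_less_def by auto
    then show "degree (monom (single (strip k \<gamma>) (lookup f \<gamma>)) (lookup \<gamma> k)) \<le> b - 1"
      using degree_monom_le[of "single (strip k \<gamma>) (lookup f \<gamma>)" "lookup \<gamma> k"] by linarith
  qed simp
  then show "degree P < b" using b by linarith
qed

lemma vars_in_at_var:
  "(\<And>j. vars_in T (coeff P j)) \<Longrightarrow> k \<in> T' \<Longrightarrow> T \<subseteq> T' \<Longrightarrow> vars_in T' (at_var k P)"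
  unfolding at_var_def poly_altdef
  by (intro vars_in_sum vars_in_mult vars_in_pow vars_in_var) (auto intro: vars_in_mono)

lemma deg_less_at_var:
  "(\<And>j. vars_in (- {k}) (coeff R j)) \<Longrightarrow> degree R < b \<Longrightarrow> deg_less k b (at_var k R)"
  unfolding at_var_def poly_altdef
  by (intro deg_less_sum deg_less_free_mult) (auto simp: var_pow deg_less_def)

lemma vars_in_coeff_mult:
  "(\<And>j. vars_in S (coeff p j)) \<Longrightarrow> (\<And>j. vars_in S (coeff q j)) \<Longrightarrow> vars_in S (coeff (p * q) j)"
  unfolding coeff_mult by (intro vars_in_sum vars_in_mult) auto

lemma of_int_mult_monomial: "of_int z * monomial \<alpha> = single \<alpha> z"
  by (simp add: monomial_def mult_single flip: single_of_int)

locale triangular_system =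
  fixes n :: nat and \<beta> :: "nat \<Rightarrow> nat" and g :: "nat \<Rightarrow> mpoly_int"
    and G :: "nat \<Rightarrow> mpoly_int poly"
  assumes monic: "k \<in> {1..n} \<Longrightarrow> lead_coeff (G k) = 1"
    and degree_G: "k \<in> {1..n} \<Longrightarrow> degree (G k) = \<beta> k"
    and beta_pos: "k \<in> {1..n} \<Longrightarrow> 1 \<le> \<beta> k"
    and vars_in_coeff_G: "k \<in> {1..n} \<Longrightarrow> vars_in {Suc k..n} (coeff (G k) j)"
    and g_def: "k \<in> {1..n} \<Longrightarrow> g k = at_var k (G k)"
begin

definition ideal :: "mpoly_int set" where
  "ideal = {(\<Sum>i=1..n. c i * g i) | c. \<forall>i\<in>{1..n}. in_R n (c i)}"

definition basis_exps :: "(nat \<Rightarrow>\<^sub>0 nat) set" where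
  "basis_exps = {\<alpha>. keys \<alpha> \<subseteq> {1..n} \<and> (\<forall>i\<in>{1..n}. lookup \<alpha> i \<le> \<beta> i - 1)}"

definition rem :: "nat \<Rightarrow> mpoly_int \<Rightarrow> mpoly_int" where
  "rem k f = (THE r. deg_less k (\<beta> k) r \<and> (\<exists>q. f - r = q * g k))"

lemma vars_in_g: "k \<in> {1..n} \<Longrightarrow> vars_in {k..n} (g k)"
  using g_def vars_in_coeff_G by (auto intro!: vars_in_at_var)

text \<open>A nonzero multiple of g_k has x_k-degree at least beta_k (g_k is monic in x_k).\<close>
lemma multiple_deg_less_eq_0:
  assumes k: "k \<in> {1..n}" and r: "deg_less k (\<beta> k) r" and r_mult: "r = q * g k"
  shows "r = 0"
proof -
  have free: "- {k} = UNIV - {k}" by auto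
  have univ: "vars_in UNIV p" for p by (simp add: vars_in_def)
  obtain Q where Q: "\<forall>j. vars_in (- {k}) (coeff Q j)" "at_var k Q = q"
    using at_var_expansion[OF univ[of q], of k] unfolding free by metis
  obtain R where R: "\<forall>j. vars_in (- {k}) (coeff R j)" "at_var k R = r" "degree R < \<beta> k"
    using at_var_expansion[OF univ[of r], of k] r beta_pos[OF k] unfolding free by metis
  have G_free: "vars_in (- {k}) (coeff (G k) j)" for j
    using vars_in_coeff_G[OF k] by (rule vars_in_mono) auto
  have "\<forall>j. vars_in (- {k}) (coeff (R - Q * G k) j)"
    using R(1) Q(1) G_free by (simp add: vars_in_diff vars_in_coeff_mult)
  moreover have "at_var k (R - Q * G k) = 0"
    using R(2) Q(2) r_mult g_def[OF k] by (simp add: at_var_def)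
  ultimately have "R - Q * G k = 0" by (rule at_var_eq_0)
  then have R_eq: "R = Q * G k" by simp
  have "Q = 0"
  proof (rule ccontr)
    assume "Q \<noteq> 0"
    have "coeff (Q * G k) (degree Q + degree (G k)) = lead_coeff Q"
      using coeff_mult_degree_sum[of Q "G k"] monic[OF k] by simp
    also have "\<dots> \<noteq> 0" using \<open>Q \<noteq> 0\<close> by simp
    finally have "degree Q + degree (G k) \<le> degree R" unfolding R_eq by (rule le_degree)
    then show False using R(3) degree_G[OF k] by simp
  qed
  then show "r = 0" using R_eq R(2) by (simp add: at_var_def)
qed

lemma division_exists:
  assumes k: "k \<in> {1..n}" and f: "vars_in S f" and S: "{k..n} \<subseteq> S"
  shows "\<exists>q r. vars_in S q \<and> vars_in S r \<and> deg_less k (\<beta> k) r \<and> f - r = q * g k"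
proof -
  have kS: "k \<in> S" using S k by auto
  obtain P where P: "\<forall>j. vars_in (S - {k}) (coeff P j)" "at_var k P = f"
    using at_var_expansion[OF f, of k] by metis
  have G_coeff: "vars_in (S - {k}) (coeff (G k) j)" for j
    using vars_in_coeff_G[OF k] by (rule vars_in_mono) (use S in auto)
  obtain Q R where QR: "\<forall>j. vars_in (S - {k}) (coeff Q j)" "\<forall>j. vars_in (S - {k}) (coeff R j)"
      "P = G k * Q + R" "degree R < degree (G k)"
    using monic_division_in_subring[where A = "vars_in (S - {k})" and G = "G k" and P = P]
      vars_in_add vars_in_diff vars_in_mult G_coeff monic[OF k] degree_G[OF k] beta_pos[OF k] P(1)
    by auto
  have "vars_in S (at_var k Q)" "vars_in S (at_var k R)"
    using QR(1,2) kS by (auto intro!: vars_in_at_var[of "S - {k}"])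
  moreover have "deg_less k (\<beta> k) (at_var k R)"
    using QR(2,4) degree_G[OF k] by (intro deg_less_at_var) (auto intro: vars_in_mono)
  moreover have "f - at_var k R = at_var k Q * g k"
    using P(2) QR(3) g_def[OF k] by (simp add: at_var_def algebra_simps)
  ultimately show ?thesis by blast
qed

lemma rem_eqI:
  assumes k: "k \<in> {1..n}" and r: "deg_less k (\<beta> k) r" and r_mod: "f - r = q * g k"
  shows "rem k f = r"
  unfolding rem_def
proof (rule the_equality)
  show "deg_less k (\<beta> k) r \<and> (\<exists>q. f - r = q * g k)" using r r_mod by blast
next
  fix r' assume "deg_less k (\<beta> k) r' \<and> (\<exists>q. f - r' = q * g k)"
  then obtain q' where r': "deg_less k (\<beta> k) r'" "f - r' = q' * g k" by blast
  have "r' - r = (q - q') * g k" using r_mod r'(2) by (simp add: algebra_simps)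
  moreover have "deg_less k (\<beta> k) (r' - r)" using r'(1) r by (rule deg_less_diff)
  ultimately have "r' - r = 0" using multiple_deg_less_eq_0[OF k] by blast
  then show "r' = r" by simp
qed

lemma rem_props:
  assumes k: "k \<in> {1..n}" and f: "vars_in S f" and S: "{k..n} \<subseteq> S"
  shows "vars_in S (rem k f) \<and> deg_less k (\<beta> k) (rem k f) \<and> (\<exists>q. vars_in S q \<and> f - rem k f = q * g k)"
  using division_exists[OF assms] rem_eqI[OF k] by metis

lemma rem_congruent: "k \<in> {1..n} \<Longrightarrow> \<exists>q. f - rem k f = q * g k"
  using rem_props[of k UNIV f] by (auto simp: vars_in_def)

lemma rem_deg_less: "k \<in> {1..n} \<Longrightarrow> deg_less k (\<beta> k) (rem k f)"
  using rem_props[of k UNIV f] by (simp add: vars_in_def)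

lemma rem_add:
  assumes k: "k \<in> {1..n}"
  shows "rem k (f + f') = rem k f + rem k f'"
proof -
  obtain q q' where q: "f - rem k f = q * g k" and q': "f' - rem k f' = q' * g k"
    using rem_congruent[OF k] by metis
  have "f + f' - (rem k f + rem k f') = (f - rem k f) + (f' - rem k f')"
    by (simp add: algebra_simps)
  also have "\<dots> = (q + q') * g k"
    by (simp only: q q' distrib_right)
  finally have "f + f' - (rem k f + rem k f') = (q + q') * g k" .
  then show ?thesis using rem_deg_less[OF k] by (intro rem_eqI[OF k] deg_less_add)
qed

lemma rem_0: "k \<in> {1..n} \<Longrightarrow> rem k 0 = 0"
  by (rule rem_eqI[of k 0 0 0]) auto

lemma rem_sum: "k \<in> {1..n} \<Longrightarrow> rem k (sum f A) = (\<Sum>a\<in>A. rem k (f a))"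
  by (induction A rule: infinite_finite_induct) (auto simp: rem_0 rem_add)

lemma rem_free_mult:
  assumes k: "k \<in> {1..n}" and p: "vars_in (- {k}) p"
  shows "rem k (p * f) = p * rem k f"
proof -
  obtain q where q: "f - rem k f = q * g k" using rem_congruent[OF k] by metis
  have "p * f - p * rem k f = (p * q) * g k" using q by (simp add: algebra_simps flip: q)
  then show ?thesis using deg_less_free_mult[OF p rem_deg_less[OF k]] by (rule rem_eqI[OF k, rotated])
qed

lemma rem_multiple: "k \<in> {1..n} \<Longrightarrow> rem k (q * g k) = 0"
  by (rule rem_eqI[of k 0 "q * g k" q]) auto

lemma rem_reduced: "k \<in> {1..n} \<Longrightarrow> deg_less k (\<beta> k) f \<Longrightarrow> rem k f = f"
  by (rule rem_eqI[of k f f 0]) auto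

text \<open>Reduction in x_k does not spoil reducedness in an earlier variable x_j, j < k: the
  generator g_k does not involve x_j.\<close>
lemma rem_keeps_deg_less:
  assumes k: "k \<in> {1..n}" and j: "j < k" and f: "deg_less j b f"
  shows "deg_less j b (rem k f)"
proof -
  have "rem k f = (\<Sum>\<gamma>\<in>keys f. single (strip k \<gamma>) (lookup f \<gamma>) * rem k (var k ^ lookup \<gamma> k))"
    by (subst sum_of_terms_in_var[of f k])
      (simp add: rem_sum[OF k] rem_free_mult[OF k vars_in_single_strip])
  also have "deg_less j b \<dots>"
  proof (rule deg_less_sum)
    fix \<gamma> assume \<gamma>: "\<gamma> \<in> keys f"
    have "vars_in {k..n} (var k ^ lookup \<gamma> k)" using k by (intro vars_in_pow vars_in_var) simp
    then have "vars_in {k..n} (rem k (var k ^ lookup \<gamma> k))"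
      using rem_props[OF k] by blast
    then have "vars_in (- {j}) (rem k (var k ^ lookup \<gamma> k))"
      by (rule vars_in_mono) (use j in auto)
    moreover have "deg_less j b (single (strip k \<gamma>) (lookup f \<gamma>))"
      using \<gamma> f j unfolding deg_less_def by (simp add: lookup_strip)
    ultimately show "deg_less j b (single (strip k \<gamma>) (lookup f \<gamma>) * rem k (var k ^ lookup \<gamma> k))"
      by (subst mult.commute) (rule deg_less_free_mult)
  qed
  finally show ?thesis .
qed

lemma ideal_0: "0 \<in> ideal"
  unfolding ideal_def by (rule CollectI, rule exI[of _ "\<lambda>_. 0"]) (simp add: in_R_iff_vars_in)

lemma ideal_add:
  assumes "x \<in> ideal" "y \<in> ideal"
  shows "x + y \<in> ideal"
proof -
  obtain c d where c: "x = (\<Sum>i=1..n. c i * g i)" "\<forall>i\<in>{1..n}. in_R n (c i)"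
    and d: "y = (\<Sum>i=1..n. d i * g i)" "\<forall>i\<in>{1..n}. in_R n (d i)"
    using assms unfolding ideal_def by blast
  have "x + y = (\<Sum>i=1..n. (c i + d i) * g i)" using c d by (simp add: sum.distrib distrib_right)
  moreover have "\<forall>i\<in>{1..n}. in_R n (c i + d i)" using c d by (simp add: in_R_iff_vars_in vars_in_add)
  ultimately show ?thesis unfolding ideal_def mem_Collect_eq by (intro exI[of _ "\<lambda>i. c i + d i"]) simp
qed

lemma ideal_multiple:
  assumes k: "k \<in> {1..n}" and q: "vars_in {1..n} q"
  shows "q * g k \<in> ideal"
proof -
  have "q * g k = (\<Sum>i=1..n. (if i = k then q else 0) * g i)"
    using k by (simp add: if_distrib[of "\<lambda>x. x * _"] cong: if_cong)
  moreover have "\<forall>i\<in>{1..n}. in_R n (if i = k then q else 0)" using q by (simp add: in_R_iff_vars_in)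
  ultimately show ?thesis
    unfolding ideal_def mem_Collect_eq by (intro exI[of _ "\<lambda>i. if i = k then q else 0"]) simp
qed

primrec nf :: "nat \<Rightarrow> mpoly_int \<Rightarrow> mpoly_int" where
  "nf 0 f = f"
| "nf (Suc k) f = rem (Suc k) (nf k f)"

lemma nf_vars_in: "vars_in {1..n} f \<Longrightarrow> k \<le> n \<Longrightarrow> vars_in {1..n} (nf k f)"
  by (induction k) (use rem_props in auto)

lemma nf_congruent: "vars_in {1..n} f \<Longrightarrow> k \<le> n \<Longrightarrow> f - nf k f \<in> ideal"
proof (induction k)
  case 0
  then show ?case using ideal_0 by simp
next
  case (Suc k)
  have k: "Suc k \<in> {1..n}" using Suc.prems by simp
  obtain q where q: "vars_in {1..n} q" "nf k f - nf (Suc k) f = q * g (Suc k)"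
    using rem_props[OF k nf_vars_in[of f k]] Suc.prems by auto
  have "f - nf (Suc k) f = (f - nf k f) + (nf k f - nf (Suc k) f)" by simp
  also have "\<dots> \<in> ideal" using Suc ideal_add ideal_multiple[OF k] q by simp
  finally show ?case .
qed

lemma nf_deg_less: "k \<le> n \<Longrightarrow> j \<in> {1..k} \<Longrightarrow> deg_less j (\<beta> j) (nf k f)"
proof (induction k)
  case (Suc k)
  show ?case
  proof (cases "j = Suc k")
    case True
    then show ?thesis using rem_deg_less Suc.prems by simp
  next
    case False
    then have "deg_less j (\<beta> j) (nf k f)" using Suc by simp
    then show ?thesis using rem_keeps_deg_less[of "Suc k" j] False Suc.prems by simp
  qed
qed simp

lemma nf_sum: "k \<le> n \<Longrightarrow> nf k (sum f A) = (\<Sum>a\<in>A. nf k (f a))"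
  by (induction k) (simp_all add: rem_sum)

text \<open>Multiples of g_i survive the reductions in x_1..x_{i-1} as multiples of g_i (which is free
  of these variables) and are annihilated by the reduction in x_i.\<close>
lemma nf_multiple:
  "i \<in> {1..n} \<Longrightarrow> k \<le> n \<Longrightarrow> nf k (q * g i) = (if k < i then nf k q * g i else 0)"
proof (induction k)
  case (Suc k)
  have k: "Suc k \<in> {1..n}" using Suc.prems by simp
  consider "Suc k < i" | "Suc k = i" | "i < Suc k" by linarith
  then show ?case
  proof cases
    case 1
    have "vars_in (- {Suc k}) (g i)" using vars_in_g[OF Suc.prems(1)] by (rule vars_in_mono) (use 1 in auto)
    then show ?thesis using 1 Suc rem_free_mult[OF k, of "g i" "nf k q"] by (simp add: mult.commute)
  next
    case 2
    then show ?thesis using Suc rem_multiple[OF k] by (simp add: 2[symmetric])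
  next
    case 3
    then show ?thesis using Suc rem_0[OF k] by simp
  qed
qed simp

lemma nf_ideal: "x \<in> ideal \<Longrightarrow> nf n x = 0"
  unfolding ideal_def by (auto simp: nf_sum nf_multiple)

lemma nf_reduced: "k \<le> n \<Longrightarrow> (\<forall>j\<in>{1..n}. deg_less j (\<beta> j) f) \<Longrightarrow> nf k f = f"
  by (induction k) (simp_all add: rem_reduced)

lemma finite_basis_exps: "finite basis_exps"
proof (rule finite_subset)
  show "basis_exps \<subseteq> {\<alpha>. keys \<alpha> \<subseteq> {1..n} \<and> (\<forall>i. lookup \<alpha> i \<le> (\<Sum>j=1..n. \<beta> j))}"
  proof (rule subsetI, rule CollectI, intro conjI allI)
    fix \<alpha> i assume \<alpha>: "\<alpha> \<in> basis_exps"
    show "keys \<alpha> \<subseteq> {1..n}" using \<alpha> unfolding basis_exps_def by simp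
    show "lookup \<alpha> i \<le> (\<Sum>j=1..n. \<beta> j)"
    proof (cases "i \<in> {1..n}")
      case True
      then have "lookup \<alpha> i \<le> \<beta> i" using \<alpha> unfolding basis_exps_def by fastforce
      also have "\<beta> i \<le> (\<Sum>j=1..n. \<beta> j)" using True by (intro member_le_sum) auto
      finally show ?thesis .
    next
      case False
      then have "i \<notin> keys \<alpha>" using \<alpha> unfolding basis_exps_def by blast
      then show ?thesis by (simp add: in_keys_iff)
    qed
  qed
qed (rule finite_bounded_exps, simp)

lemma keys_subset_basis_exps_iff:
  "keys p \<subseteq> basis_exps \<longleftrightarrow> vars_in {1..n} p \<and> (\<forall>j\<in>{1..n}. deg_less j (\<beta> j) p)"
  using beta_pos unfolding basis_exps_def vars_in_def deg_less_def by fastforce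

lemma lookup_combination:
  "lookup (\<Sum>\<alpha>\<in>basis_exps. of_int (c \<alpha>) * monomial \<alpha>) \<gamma> = (if \<gamma> \<in> basis_exps then c \<gamma> else 0)"
  using finite_basis_exps by (simp add: of_int_mult_monomial lookup_sum lookup_single when_def)

text \<open>Spanning: every f is congruent modulo the ideal to its normal form, a combination of
  basis monomials.\<close>
lemma basis_spans:
  assumes "in_R n f"
  shows "\<exists>c. f - (\<Sum>\<alpha>\<in>basis_exps. of_int (c \<alpha>) * monomial \<alpha>) \<in> ideal"
proof
  have f: "vars_in {1..n} f" using assms by (simp add: in_R_iff_vars_in)
  have "keys (nf n f) \<subseteq> basis_exps"
    using nf_vars_in[OF f] nf_deg_less by (simp add: keys_subset_basis_exps_iff)
  then have "nf n f = (\<Sum>\<alpha>\<in>basis_exps. of_int (lookup (nf n f) \<alpha>) * monomial \<alpha>)"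
    by (intro poly_mapping_eqI) (auto simp: lookup_combination in_keys_iff)
  then show "f - (\<Sum>\<alpha>\<in>basis_exps. of_int (lookup (nf n f) \<alpha>) * monomial \<alpha>) \<in> ideal"
    using nf_congruent[OF f] by simp
qed

text \<open>Independence: a combination of basis monomials is its own normal form, while the
  normal form of an ideal element vanishes.\<close>
lemma basis_independent:
  assumes J: "(\<Sum>\<alpha>\<in>basis_exps. of_int (c \<alpha>) * monomial \<alpha>) \<in> ideal" and \<alpha>: "\<alpha> \<in> basis_exps"
  shows "c \<alpha> = 0"
proof -
  define s where "s = (\<Sum>\<alpha>\<in>basis_exps. of_int (c \<alpha>) * monomial \<alpha>)"
  have "keys s \<subseteq> basis_exps"
    by (auto simp: s_def lookup_combination in_keys_iff split: if_splits)
  then have "s = nf n s" using nf_reduced[of n s] by (simp add: keys_subset_basis_exps_iff)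
  also have "\<dots> = 0" using nf_ideal J s_def by simp
  finally show "c \<alpha> = 0" using lookup_combination[of c \<alpha>] \<alpha> by (simp add: s_def)
qed

end

text \<open>For a Hessenberg function, h_k < i forces k < i, so at most i - 1 indices are subtracted in
  beta_i and every beta_i is positive.\<close>
lemma hess_beta_pos:
  assumes h: "is_hessenberg n h" and i: "i \<in> {1..n}"
  shows "1 \<le> hess_beta n h i"
proof -
  have "{k \<in> {1..n}. h k < i} \<subseteq> {1..i - 1}"
    using h unfolding is_hessenberg_def by fastforce
  then have "card {k \<in> {1..n}. h k < i} \<le> i - 1"
    using card_mono[of "{1..i - 1}"] by fastforce
  then show ?thesis using i unfolding hess_beta_def by auto
qed

definition exps_of_degree :: "nat \<Rightarrow> nat set \<Rightarrow> (nat \<Rightarrow>\<^sub>0 nat) set" where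
  "exps_of_degree r S = {\<alpha>. keys \<alpha> \<subseteq> S \<and> (\<Sum>j\<in>S. lookup \<alpha> j) = r}"

lemma complete_hom_eq: "complete_hom r S = (\<Sum>\<alpha>\<in>exps_of_degree r S. single \<alpha> 1)"
  by (simp add: complete_hom_def monomial_def exps_of_degree_def)

lemma finite_exps_of_degree:
  assumes S: "finite S"
  shows "finite (exps_of_degree r S)"
proof (rule finite_subset)
  show "exps_of_degree r S \<subseteq> {\<alpha>. keys \<alpha> \<subseteq> S \<and> (\<forall>i. lookup \<alpha> i \<le> r)}"
  proof (rule subsetI, rule CollectI, intro conjI allI)
    fix \<alpha> i assume \<alpha>: "\<alpha> \<in> exps_of_degree r S"
    then show "keys \<alpha> \<subseteq> S" by (simp add: exps_of_degree_def)
    show "lookup \<alpha> i \<le> r"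
    proof (cases "i \<in> S")
      case True
      then show ?thesis using \<alpha> member_le_sum[OF True _ S, of "lookup \<alpha>"]
        by (simp add: exps_of_degree_def)
    next
      case False
      then have "i \<notin> keys \<alpha>" using \<alpha> by (auto simp: exps_of_degree_def)
      then show ?thesis by (simp add: in_keys_iff)
    qed
  qed
qed (rule finite_bounded_exps[OF S])

lemma vars_in_complete_hom: "vars_in S (complete_hom r S)"
  unfolding complete_hom_eq exps_of_degree_def by (intro vars_in_sum vars_in_single) auto

lemma complete_hom_0: "finite S \<Longrightarrow> complete_hom 0 S = 1"
proof -
  assume S: "finite S"
  have "exps_of_degree 0 S = {0}"
  proof (intro equalityI subsetI)
    fix \<alpha> assume "\<alpha> \<in> exps_of_degree 0 S"
    then have "keys \<alpha> \<subseteq> S" "\<forall>j\<in>S. lookup \<alpha> j = 0"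
      using sum_eq_0_iff[OF S, of "lookup \<alpha>"] by (auto simp: exps_of_degree_def)
    then have "lookup \<alpha> j = 0" for j by (metis in_keys_iff subsetD)
    then have "\<alpha> = 0" by (intro poly_mapping_eqI) simp
    then show "\<alpha> \<in> {0}" by simp
  qed (simp add: exps_of_degree_def)
  then show ?thesis by (simp add: complete_hom_eq)
qed

lemma exps_of_degree_split:
  assumes kn: "k \<le> n"
  shows "bij_betw (\<lambda>(j, \<alpha>). \<alpha> + single k j)
           (SIGMA j:{..r}. exps_of_degree (r - j) {Suc k..n}) (exps_of_degree r {k..n})"
proof -
  have sum_split: "(\<Sum>j\<in>{k..n}. f j) = f k + (\<Sum>j\<in>{Suc k..n}. f j)" for f :: "nat \<Rightarrow> nat"
    using kn by (rule sum.atLeast_Suc_atMost)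
  have lookup_shift: "lookup (\<alpha> + single k j) i = lookup \<alpha> i + (if i = k then j else 0)"
    for \<alpha> j i by (simp add: lookup_add lookup_single when_def)
  have no_k: "lookup \<alpha> k = 0" if "\<alpha> \<in> exps_of_degree m {Suc k..n}" for \<alpha> m
    using that by (auto simp: exps_of_degree_def in_keys_iff)
  have inverse: "lookup (\<alpha> + single k j) k = j" "strip k (\<alpha> + single k j) = \<alpha>"
    if "\<alpha> \<in> exps_of_degree m {Suc k..n}" for \<alpha> j m
    using no_k[OF that] by (auto simp: lookup_shift lookup_strip intro!: poly_mapping_eqI)
  have forward: "\<alpha> + single k j \<in> exps_of_degree r {k..n}"
    if j: "j \<le> r" and \<alpha>: "\<alpha> \<in> exps_of_degree (r - j) {Suc k..n}" for j \<alpha>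
  proof -
    have "(\<Sum>i\<in>{Suc k..n}. lookup (\<alpha> + single k j) i) = r - j"
      using \<alpha> by (simp add: lookup_shift exps_of_degree_def)
    then show ?thesis
      using \<alpha> j kn sum_split[of "lookup (\<alpha> + single k j)"] no_k[OF \<alpha>]
      by (auto simp: exps_of_degree_def keys_add_exps lookup_shift)
  qed
  have backward: "lookup \<alpha> k \<le> r \<and> strip k \<alpha> \<in> exps_of_degree (r - lookup \<alpha> k) {Suc k..n}"
    if \<alpha>: "\<alpha> \<in> exps_of_degree r {k..n}" for \<alpha>
  proof -
    have "(\<Sum>i\<in>{Suc k..n}. lookup (strip k \<alpha>) i) = (\<Sum>i\<in>{Suc k..n}. lookup \<alpha> i)"
      by (rule sum.cong) (auto simp: lookup_strip)
    then show ?thesis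
      using \<alpha> sum_split[of "lookup \<alpha>"] by (auto simp: exps_of_degree_def keys_strip)
  qed
  show ?thesis
    by (rule bij_betw_byWitness[where f' = "\<lambda>\<alpha>. (lookup \<alpha> k, strip k \<alpha>)"])
      (auto simp: inverse forward backward strip_add)
qed

lemma complete_hom_split:
  assumes kn: "k \<le> n"
  shows "complete_hom r {k..n} = (\<Sum>j\<le>r. complete_hom (r - j) {Suc k..n} * var k ^ j)"
proof -
  have "(\<Sum>j\<le>r. complete_hom (r - j) {Suc k..n} * var k ^ j)
      = (\<Sum>j\<le>r. \<Sum>\<alpha>\<in>exps_of_degree (r - j) {Suc k..n}. single (\<alpha> + single k j) 1)"
    by (simp add: complete_hom_eq sum_distrib_right var_pow mult_single)
  also have "\<dots> = (\<Sum>(j, \<alpha>)\<in>(SIGMA j:{..r}. exps_of_degree (r - j) {Suc k..n}). single (\<alpha> + single k j) 1)"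
    by (rule sum.Sigma) (auto intro: finite_exps_of_degree)
  also have "\<dots> = (\<Sum>\<alpha>\<in>exps_of_degree r {k..n}. single \<alpha> 1)"
    using sum.reindex_bij_betw[OF exps_of_degree_split[OF kn, of r], of "\<lambda>\<alpha>. single \<alpha> 1"]
    by (simp add: case_prod_unfold)
  finally show ?thesis by (simp add: complete_hom_eq)
qed

definition hess_poly :: "nat \<Rightarrow> nat \<Rightarrow> nat \<Rightarrow> mpoly_int poly" where
  "hess_poly n r k = (\<Sum>j\<le>r. monom (complete_hom (r - j) {Suc k..n}) j)"

lemma coeff_hess_poly:
  "coeff (hess_poly n r k) j = (if j \<le> r then complete_hom (r - j) {Suc k..n} else 0)"
  unfolding hess_poly_def coeff_sum coeff_monom by simp

lemma degree_hess_poly: "degree (hess_poly n r k) = r"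
proof (rule antisym)
  show "degree (hess_poly n r k) \<le> r" unfolding hess_poly_def
    by (rule degree_sum_le) (auto intro: order_trans[OF degree_monom_le])
  show "r \<le> degree (hess_poly n r k)"
    by (rule le_degree) (simp add: coeff_hess_poly complete_hom_0)
qed

lemma lead_coeff_hess_poly: "lead_coeff (hess_poly n r k) = 1"
  by (simp add: degree_hess_poly coeff_hess_poly complete_hom_0)

lemma at_var_hess_poly: "k \<le> n \<Longrightarrow> at_var k (hess_poly n r k) = complete_hom r {k..n}"
  unfolding at_var_def hess_poly_def by (simp add: poly_sum poly_monom complete_hom_split)

lemma hessenberg_triangular_system:
  assumes "is_hessenberg n h"
  shows "triangular_system n (hess_beta n h) (\<lambda>k. complete_hom (hess_beta n h k) {k..n})
           (\<lambda>k. hess_poly n (hess_beta n h k) k)"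
proof
  fix k j assume k: "k \<in> {1..n}"
  show "lead_coeff (hess_poly n (hess_beta n h k) k) = 1" by (rule lead_coeff_hess_poly)
  show "degree (hess_poly n (hess_beta n h k) k) = hess_beta n h k" by (rule degree_hess_poly)
  show "1 \<le> hess_beta n h k" using hess_beta_pos[OF assms k] .
  show "vars_in {Suc k..n} (coeff (hess_poly n (hess_beta n h k) k) j)"
    by (simp add: coeff_hess_poly vars_in_complete_hom)
  show "complete_hom (hess_beta n h k) {k..n} = at_var k (hess_poly n (hess_beta n h k) k)"
    using k by (simp add: at_var_hess_poly)
qed

theorem mainTheorem10:
  fixes n :: nat and h :: "nat \<Rightarrow> nat"
  assumes "is_hessenberg n h"
  shows "(\<forall>f :: mpoly_int. in_R n f \<longrightarrow> (\<exists>c :: (nat \<Rightarrow>\<^sub>0 nat) \<Rightarrow> int.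
            f - (\<Sum>\<alpha>\<in>hess_basis_exps n h. of_int (c \<alpha>) * monomial \<alpha>) \<in> hess_ideal n h))
       \<and> (\<forall>c :: (nat \<Rightarrow>\<^sub>0 nat) \<Rightarrow> int.
            (\<Sum>\<alpha>\<in>hess_basis_exps n h. of_int (c \<alpha>) * monomial \<alpha>) \<in> hess_ideal n h
            \<longrightarrow> (\<forall>\<alpha>\<in>hess_basis_exps n h. c \<alpha> = 0))"
proof -
  interpret triangular_system n "hess_beta n h" "\<lambda>k. complete_hom (hess_beta n h k) {k..n}"
      "\<lambda>k. hess_poly n (hess_beta n h k) k"
    by (rule hessenberg_triangular_system[OF assms])
  have "hess_basis_exps n h = basis_exps" by (simp add: hess_basis_exps_def basis_exps_def)
  moreover have "hess_ideal n h = ideal" by (simp add: hess_ideal_def ideal_def)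
  ultimately show ?thesis using basis_spans basis_independent by auto
qed

end
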